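(* Let $(K,\tau)\in\mathfrak U$ be a universal regular model. Then for every $\phi\in\mathcal X$, \[ \frac{1}{\sqrt2}\,\sqrt{\|\phi\|_{cb}}\ \le\ \delta^{\tau}_{\mathrm{reg}}(\phi,0)\ \le\ c_+(\tau)\,\sqrt{\|\phi\|_{cb}}, \qquad c_+(\tau):=\frac{\sqrt{1+\|\tau(1)\|^2}}{\sqrt2}. \]
   Context: Let $A$ be a unital $C^*$-algebra and $H$ a Hilbert space. Write $\mathcal X:=\mathrm{CB}(A,B(H))$ for the completely bounded linear maps $A\to B(H)$ with cb-norm $\|\cdot\|_{cb}$, and $\mathrm{CC}(A,B(H))$ for the completely contractive maps. A multiplicative linear map $\tau:A\to B(K)$ ($K$ a Hilbert space) is a regular homomorphism if $\tau(u)^*\tau(u)=\tau(1)^*\tau(1)$ and $\tau(u)\tau(u)^*=\tau(1)\tau(1)^*$ for every unitary $u\in A$. A universal regular model is a pair $(K,\tau)$ with $\tau:A\to B(K)$ a regular homomorphism such that every $\psi\in\mathrm{CC}(A,B(H))$ has the form $\psi(a)=V^*\tau(a)V$ ($a\in A$) for some isometry $V\in B(H,K)$; $\mathfrak U$ denotes the collection of all universal regular models. For $(K,\tau)\in\mathfrak U$ put $T_\tau:=\tau(1)$. For $0\neq\phi\in\mathcal X$ let $\widehat\phi:=\phi/\|\phi\|_{cb}$ and $\mathscr R_\tau(\phi):=\{\|\phi\|_{cb}^{1/2}V:\ V\in B(H,K)\text{ an isometry with }\widehat\phi(a)=V^*\tau(a)V\ \forall a\in A\}$; put $\mathscr R_\tau(0):=\{0\}$.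 Let $\Gamma_\tau:B(H,K)\to B(H,K\oplus K)$, $\Gamma_\tau(W):=\frac1{\sqrt2}\begin{bmatrix}W\\ T_\tau W\end{bmatrix}$, and $\mathscr F_\tau(\phi):=\Gamma_\tau(\mathscr R_\tau(\phi))$ (a nonempty norm-closed bounded subset of $B(H,K\oplus K)$). Let $\delta^\tau_{\mathrm{reg}}(\phi,\psi)$ denote the Hausdorff distance, with respect to the operator norm, between $\mathscr F_\tau(\phi)$ and $\mathscr F_\tau(\psi)$; in particular $\delta^\tau_{\mathrm{reg}}(\phi,0)$ is the Hausdorff distance between $\mathscr F_\tau(\phi)$ and $\{0\}$. *)

theory Defs
  imports "HOL-Analysis.Analysis"
begin

class complex_vector = real_vector +
  fixes scaleC :: "complex \<Rightarrow> 'a \<Rightarrow> 'a"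
  assumes scaleC_add_right: "scaleC c (x + y) = scaleC c x + scaleC c y"
    and scaleC_add_left: "scaleC (c + d) x = scaleC c x + scaleC d x"
    and scaleC_scaleC: "scaleC c (scaleC d x) = scaleC (c * d) x"
    and scaleC_one: "scaleC 1 x = x"
    and scaleR_scaleC: "scaleR r x = scaleC (complex_of_real r) x"

class complex_inner = complex_vector + real_normed_vector +
  fixes cinner :: "'a \<Rightarrow> 'a \<Rightarrow> complex"
  assumes cinner_conj: "cinner x y = cnj (cinner y x)"
    and cinner_add_right: "cinner x (y + z) = cinner x y + cinner x z"
    and cinner_scaleC_right: "cinner x (scaleC c y) = c * cinner x y"
    and cinner_real: "Im (cinner x x) = 0"
    and cinner_nonneg: "0 \<le> Re (cinner x x)"
    and cinner_eq_zero: "cinner x x = 0 \<longleftrightarrow> x = 0"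
    and norm_cinner: "norm x = sqrt (Re (cinner x x))"

class chilbert_space = complex_inner + complete_space

definition clinear :: "('a::complex_vector \<Rightarrow> 'b::complex_vector) \<Rightarrow> bool" where
  "clinear f \<longleftrightarrow> (\<forall>x y. f (x + y) = f x + f y) \<and> (\<forall>c x. f (scaleC c x) = scaleC c (f x))"

definition bounded_clinear :: "('a::complex_inner \<Rightarrow> 'b::complex_inner) \<Rightarrow> bool" where
  "bounded_clinear f \<longleftrightarrow> clinear f \<and> (\<exists>C. \<forall>x. norm (f x) \<le> norm x * C)"

definition adj :: "('a::complex_inner \<Rightarrow> 'b::complex_inner) \<Rightarrow> ('b \<Rightarrow> 'a)" where
  "adj T = (SOME S. \<forall>x y. cinner (T x) y = cinner x (S y))"

definition isometry :: "('a::chilbert_space \<Rightarrow> 'b::chilbert_space) \<Rightarrow> bool" where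
  "isometry V \<longleftrightarrow> bounded_clinear V \<and> adj V \<circ> V = id"

definition unitary_op :: "('a::chilbert_space \<Rightarrow> 'a) \<Rightarrow> bool" where
  "unitary_op u \<longleftrightarrow> bounded_clinear u \<and> adj u \<circ> u = id \<and> u \<circ> adj u = id"

text \<open>A unital C*-algebra, realised (Gelfand--Naimark) as a norm-closed unital
  *-subalgebra of B(L).\<close>
definition unital_cstar_algebra :: "('l::chilbert_space \<Rightarrow> 'l) set \<Rightarrow> bool" where
  "unital_cstar_algebra A \<longleftrightarrow>
     (\<forall>a\<in>A. bounded_clinear a) \<and> id \<in> A \<and>
     (\<forall>a\<in>A. \<forall>b\<in>A. (\<lambda>x. a x + b x) \<in> A) \<and>
     (\<forall>a\<in>A. \<forall>c. (\<lambda>x. scaleC c (a x)) \<in> A) \<and>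
     (\<forall>a\<in>A. \<forall>b\<in>A. a \<circ> b \<in> A) \<and>
     (\<forall>a\<in>A. adj a \<in> A) \<and>
     (\<forall>T. bounded_clinear T \<and> (\<forall>e>0. \<exists>a\<in>A. onorm (\<lambda>x. T x - a x) < e) \<longrightarrow> T \<in> A)"

definition matnorm :: "nat \<Rightarrow> (nat \<Rightarrow> nat \<Rightarrow> ('a::complex_inner \<Rightarrow> 'b::complex_inner)) \<Rightarrow> real" where
  "matnorm n M = (SUP x \<in> {x::nat \<Rightarrow> 'a. (\<Sum>j<n. (norm (x j))\<^sup>2) \<le> 1}.
                    sqrt (\<Sum>i<n. (norm (\<Sum>j<n. M i j (x j)))\<^sup>2))"

definition linear_on :: "('l::chilbert_space \<Rightarrow> 'l) set \<Rightarrow> (('l \<Rightarrow> 'l) \<Rightarrow> ('h::chilbert_space \<Rightarrow> 'h)) \<Rightarrow> bool" where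
  "linear_on A \<phi> \<longleftrightarrow> (\<forall>a\<in>A. bounded_clinear (\<phi> a)) \<and>
     (\<forall>a\<in>A. \<forall>b\<in>A. \<phi> (\<lambda>x. a x + b x) = (\<lambda>y. \<phi> a y + \<phi> b y)) \<and>
     (\<forall>a\<in>A. \<forall>c. \<phi> (\<lambda>x. scaleC c (a x)) = (\<lambda>y. scaleC c (\<phi> a y)))"

definition cb_values :: "('l::chilbert_space \<Rightarrow> 'l) set \<Rightarrow> (('l \<Rightarrow> 'l) \<Rightarrow> ('h::chilbert_space \<Rightarrow> 'h)) \<Rightarrow> real set" where
  "cb_values A \<phi> = {matnorm n (\<lambda>i j. \<phi> (M i j)) | n M.
       (\<forall>i<n. \<forall>j<n. M i j \<in> A) \<and> matnorm n M \<le> 1}"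

definition cbnorm :: "('l::chilbert_space \<Rightarrow> 'l) set \<Rightarrow> (('l \<Rightarrow> 'l) \<Rightarrow> ('h::chilbert_space \<Rightarrow> 'h)) \<Rightarrow> real" where
  "cbnorm A \<phi> = Sup (cb_values A \<phi>)"

definition CB :: "('l::chilbert_space \<Rightarrow> 'l) set \<Rightarrow> (('l \<Rightarrow> 'l) \<Rightarrow> ('h::chilbert_space \<Rightarrow> 'h)) \<Rightarrow> bool" where
  "CB A \<phi> \<longleftrightarrow> linear_on A \<phi> \<and> bdd_above (cb_values A \<phi>)"

definition CC :: "('l::chilbert_space \<Rightarrow> 'l) set \<Rightarrow> (('l \<Rightarrow> 'l) \<Rightarrow> ('h::chilbert_space \<Rightarrow> 'h)) \<Rightarrow> bool" where
  "CC A \<phi> \<longleftrightarrow> CB A \<phi> \<and> cbnorm A \<phi> \<le> 1"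

definition regular_hom :: "('l::chilbert_space \<Rightarrow> 'l) set \<Rightarrow> (('l \<Rightarrow> 'l) \<Rightarrow> ('k::chilbert_space \<Rightarrow> 'k)) \<Rightarrow> bool" where
  "regular_hom A \<tau> \<longleftrightarrow> linear_on A \<tau> \<and>
     (\<forall>a\<in>A. \<forall>b\<in>A. \<tau> (a \<circ> b) = \<tau> a \<circ> \<tau> b) \<and>
     (\<forall>u\<in>A. unitary_op u \<longrightarrow>
        adj (\<tau> u) \<circ> \<tau> u = adj (\<tau> id) \<circ> \<tau> id \<and>
        \<tau> u \<circ> adj (\<tau> u) = \<tau> id \<circ> adj (\<tau> id))"

text \<open>\<open>(K,\<tau>) \<in> \<UU>\<close> relative to the fixed Hilbert space H (given by its type 'h).\<close>
definition universal_regular_model ::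
  "('l::chilbert_space \<Rightarrow> 'l) set \<Rightarrow> 'h::chilbert_space itself \<Rightarrow> (('l \<Rightarrow> 'l) \<Rightarrow> ('k::chilbert_space \<Rightarrow> 'k)) \<Rightarrow> bool" where
  "universal_regular_model A H \<tau> \<longleftrightarrow> regular_hom A \<tau> \<and>
     (\<forall>\<psi> :: ('l \<Rightarrow> 'l) \<Rightarrow> ('h \<Rightarrow> 'h). CC A \<psi> \<longrightarrow>
        (\<exists>V :: 'h \<Rightarrow> 'k. isometry V \<and> (\<forall>a\<in>A. \<psi> a = adj V \<circ> \<tau> a \<circ> V)))"

definition zero_map :: "('l::chilbert_space \<Rightarrow> 'l) set \<Rightarrow> (('l \<Rightarrow> 'l) \<Rightarrow> ('h::chilbert_space \<Rightarrow> 'h)) \<Rightarrow> bool" where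
  "zero_map A \<phi> \<longleftrightarrow> (\<forall>a\<in>A. \<phi> a = (\<lambda>x. 0))"

definition Rset :: "('l::chilbert_space \<Rightarrow> 'l) set \<Rightarrow> (('l \<Rightarrow> 'l) \<Rightarrow> ('k::chilbert_space \<Rightarrow> 'k))
      \<Rightarrow> (('l \<Rightarrow> 'l) \<Rightarrow> ('h::chilbert_space \<Rightarrow> 'h)) \<Rightarrow> ('h \<Rightarrow> 'k) set" where
  "Rset A \<tau> \<phi> = (if zero_map A \<phi> then {\<lambda>x. 0}
     else {(\<lambda>x. sqrt (cbnorm A \<phi>) *\<^sub>R V x) | V. isometry V \<and>
             (\<forall>a\<in>A. (\<lambda>y. (1 / cbnorm A \<phi>) *\<^sub>R \<phi> a y) = adj V \<circ> \<tau> a \<circ> V)})"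

definition Gamma :: "('l::chilbert_space \<Rightarrow> 'l) set \<Rightarrow> (('l \<Rightarrow> 'l) \<Rightarrow> ('k::chilbert_space \<Rightarrow> 'k))
      \<Rightarrow> ('h::chilbert_space \<Rightarrow> 'k) \<Rightarrow> ('h \<Rightarrow> 'k \<times> 'k)" where
  "Gamma A \<tau> W = (\<lambda>x. ((1 / sqrt 2) *\<^sub>R W x, (1 / sqrt 2) *\<^sub>R \<tau> id (W x)))"

definition Fset :: "('l::chilbert_space \<Rightarrow> 'l) set \<Rightarrow> (('l \<Rightarrow> 'l) \<Rightarrow> ('k::chilbert_space \<Rightarrow> 'k))
      \<Rightarrow> (('l \<Rightarrow> 'l) \<Rightarrow> ('h::chilbert_space \<Rightarrow> 'h)) \<Rightarrow> ('h \<Rightarrow> 'k \<times> 'k) set" where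
  "Fset A \<tau> \<phi> = Gamma A \<tau> ` Rset A \<tau> \<phi>"

definition op_hausdist :: "('a::real_normed_vector \<Rightarrow> 'b::real_normed_vector) set \<Rightarrow> ('a \<Rightarrow> 'b) set \<Rightarrow> real" where
  "op_hausdist S T = max (SUP s\<in>S. INF t\<in>T. onorm (\<lambda>x. s x - t x))
                         (SUP t\<in>T. INF s\<in>S. onorm (\<lambda>x. s x - t x))"

definition delta_reg :: "('l::chilbert_space \<Rightarrow> 'l) set \<Rightarrow> (('l \<Rightarrow> 'l) \<Rightarrow> ('k::chilbert_space \<Rightarrow> 'k))
      \<Rightarrow> (('l \<Rightarrow> 'l) \<Rightarrow> ('h::chilbert_space \<Rightarrow> 'h)) \<Rightarrow> (('l \<Rightarrow> 'l) \<Rightarrow> ('h \<Rightarrow> 'h)) \<Rightarrow> real" where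
  "delta_reg A \<tau> \<phi> \<psi> = op_hausdist (Fset A \<tau> \<phi>) (Fset A \<tau> \<psi>)"

end

theory Submission
  imports Defs
begin

text \<open>Every element of \<open>\<F>\<^sub>\<tau>(\<phi>)\<close> is \<open>\<Gamma>\<^sub>\<tau>(W)\<close> with \<open>W = \<parallel>\<phi>\<parallel>\<^sub>c\<^sub>b\<^sup>1\<^sup>/\<^sup>2 V\<close> for an isometry \<open>V\<close>, so
  \<open>\<parallel>W\<parallel> = \<parallel>\<phi>\<parallel>\<^sub>c\<^sub>b\<^sup>1\<^sup>/\<^sup>2\<close>. Since \<open>\<parallel>\<Gamma>\<^sub>\<tau>(W) x\<parallel>\<^sup>2 = (\<parallel>W x\<parallel>\<^sup>2 + \<parallel>\<tau>(1) W x\<parallel>\<^sup>2) / 2\<close>, the norm of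
  \<open>\<Gamma>\<^sub>\<tau>(W)\<close> lies between \<open>\<parallel>W\<parallel> / \<surd>2\<close> and \<open>((1 + \<parallel>\<tau>(1)\<parallel>\<^sup>2) / 2)\<^sup>1\<^sup>/\<^sup>2 \<parallel>W\<parallel>\<close>. As
  \<open>\<F>\<^sub>\<tau>(0) = {0}\<close>, the Hausdorff distance to it is the supremum of these norms, and
  \<open>\<F>\<^sub>\<tau>(\<phi>)\<close> is nonempty by universality applied to \<open>\<phi> / \<parallel>\<phi>\<parallel>\<^sub>c\<^sub>b\<close>.

  The adjoint in the definition of an isometry is picked by Hilbert choice, so \<open>\<parallel>V x\<parallel> = \<parallel>x\<parallel>\<close>
  requires the existence of adjoints, i.e. the Riesz representation theorem. It follows from
  the fact that a bounded functional on a Hilbert space attains its norm on the unit sphere: a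
  maximizing sequence is Cauchy by the parallelogram law.\<close>

section \<open>Complex inner product spaces\<close>

lemma cinner_add_left: "cinner (x + y) z = cinner x z + cinner (y::'a::complex_inner) z"
  by (metis cinner_conj cinner_add_right complex_cnj_add)

lemma cinner_scaleC_left: "cinner (scaleC c x) y = cnj c * cinner (x::'a::complex_inner) y"
  by (metis cinner_conj cinner_scaleC_right complex_cnj_mult)

lemma cinner_scaleR_right: "cinner x (r *\<^sub>R y) = of_real r * cinner (x::'a::complex_inner) y"
  by (simp add: scaleR_scaleC cinner_scaleC_right)

lemma cinner_scaleR_left: "cinner (r *\<^sub>R x) y = of_real r * cinner (x::'a::complex_inner) y"
  by (simp add: scaleR_scaleC cinner_scaleC_left)

lemma cinner_minus_right: "cinner x (- y) = - cinner x (y::'a::complex_inner)"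
  by (metis cinner_scaleR_right mult_minus1 of_real_1 of_real_minus scaleR_minus1_left)

lemma cinner_zero_right [simp]: "cinner x (0::'a::complex_inner) = 0"
  using cinner_scaleR_right[of x 0 0] by simp

lemma cinner_zero_left [simp]: "cinner (0::'a::complex_inner) y = 0"
  using cinner_scaleR_left[of 0 0 y] by simp

lemma power2_norm_eq_cinner: "(norm x)\<^sup>2 = Re (cinner x (x::'a::complex_inner))"
  by (simp add: norm_cinner cinner_nonneg)

lemma Re_cinner_commute: "Re (cinner y x) = Re (cinner x (y::'a::complex_inner))"
  by (subst cinner_conj) simp

lemma power2_norm_add: "(norm (x + y))\<^sup>2 = (norm x)\<^sup>2 + 2 * Re (cinner x y) + (norm (y::'a::complex_inner))\<^sup>2"
  unfolding power2_norm_eq_cinner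
  by (simp add: cinner_add_left cinner_add_right Re_cinner_commute[of y x])

lemma power2_norm_diff: "(norm (x - y))\<^sup>2 = (norm x)\<^sup>2 - 2 * Re (cinner x y) + (norm (y::'a::complex_inner))\<^sup>2"
  using power2_norm_add[of x "- y"] by (simp add: cinner_minus_right)

lemma parallelogram_law:
  "(norm (x - y))\<^sup>2 = 2 * (norm x)\<^sup>2 + 2 * (norm y)\<^sup>2 - (norm (x + (y::'a::complex_inner)))\<^sup>2"
  unfolding power2_norm_add power2_norm_diff by simp

lemma Re_cinner_le_norm: "Re (cinner x y) \<le> norm x * norm (y::'a::complex_inner)"
proof -
  have "0 \<le> (norm (norm y *\<^sub>R x - norm x *\<^sub>R y))\<^sup>2" by simp
  also have "\<dots> = 2 * (norm x * norm y) * (norm x * norm y - Re (cinner x y))"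
    unfolding power2_norm_diff by (simp add: cinner_scaleR_left cinner_scaleR_right power2_eq_square algebra_simps)
  finally have "0 \<le> norm x * norm y * (norm x * norm y - Re (cinner x y))"
    by simp
  then show ?thesis
    by (cases "x = 0 \<or> y = 0") (auto simp: zero_le_mult_iff mult_le_0_iff)
qed

lemma abs_Re_cinner_le_norm: "\<bar>Re (cinner x y)\<bar> \<le> norm x * norm (y::'a::complex_inner)"
  using Re_cinner_le_norm[of x y] Re_cinner_le_norm[of x "- y"] by (simp add: cinner_minus_right)

section \<open>Riesz representation and adjoints\<close>

lemma exists_unit_ball_near_onorm:
  fixes h :: "'a::real_normed_vector \<Rightarrow> real"
  assumes h: "bounded_linear h" and "0 < e"
  shows "\<exists>x. norm x \<le> 1 \<and> onorm h - e < h x"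
proof (rule ccontr)
  assume "\<not> ?thesis"
  then have ball: "h x \<le> onorm h - e" if "norm x \<le> 1" for x
    using that by force
  have "\<bar>h x\<bar> \<le> (onorm h - e) * norm x" for x
  proof (cases "x = 0")
    case True
    then show ?thesis using linear_0[OF bounded_linear.linear[OF h]] by simp
  next
    case False
    have "h (x /\<^sub>R norm x) \<le> onorm h - e" "h (- x /\<^sub>R norm x) \<le> onorm h - e"
      using False by (auto intro!: ball)
    then have "\<bar>h x\<bar> / norm x \<le> onorm h - e"
      using False by (simp add: linear_simps[OF h] abs_if divide_inverse mult.commute)
    then show ?thesis using False by (simp add: divide_le_eq)
  qed
  moreover have "0 \<le> onorm h - e"
    using ball[of 0] linear_0[OF bounded_linear.linear[OF h]] by simp
  ultimately have "onorm h \<le> onorm h - e"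
    by (intro onorm_bound) simp_all
  with \<open>0 < e\<close> show False by simp
qed

lemma near_maximizers_close:
  fixes h :: "'a::complex_inner \<Rightarrow> real"
  assumes h: "bounded_linear h" and L: "0 < onorm h"
    and x: "norm x \<le> 1" "onorm h - e \<le> h x"
    and y: "norm y \<le> 1" "onorm h - e \<le> h y"
  shows "(norm (x - y))\<^sup>2 \<le> 8 * e / onorm h"
proof -
  define \<delta> where "\<delta> = 2 * e / onorm h"
  define s where "s = norm (x + y)"
  have "onorm h * (2 - \<delta>) \<le> h (x + y)"
    using x y L by (simp add: linear_simps[OF h] \<delta>_def algebra_simps)
  also have "\<dots> \<le> onorm h * s"
    unfolding s_def using onorm[OF h, of "x + y"] by simp
  finally have s_ge: "2 - \<delta> \<le> s"
    using L by simp
  have "(norm x)\<^sup>2 \<le> 1" "(norm y)\<^sup>2 \<le> 1"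
    using x(1) y(1) by (simp_all add: power_le_one)
  then have "(norm (x - y))\<^sup>2 \<le> 4 - s\<^sup>2"
    unfolding parallelogram_law s_def by simp
  also have "\<dots> \<le> 4 * \<delta>"
  proof (cases "\<delta> \<le> 2")
    case True
    then have "(2 - \<delta>)\<^sup>2 \<le> s\<^sup>2" using s_ge by (simp add: power_mono)
    then show ?thesis
      using zero_le_square[of \<delta>] unfolding power2_eq_square by argo
  qed (use zero_le_power2[of s] in linarith)
  finally show ?thesis
    using L by (simp add: \<delta>_def)
qed

lemma Cauchy_if_power2_norm_diff_le:
  fixes X :: "nat \<Rightarrow> 'a::real_normed_vector"
  assumes "\<And>N m n. N \<le> m \<Longrightarrow> N \<le> n \<Longrightarrow> (norm (X m - X n))\<^sup>2 \<le> inverse (real (Suc N))"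
  shows "Cauchy X"
proof (rule CauchyI)
  fix r :: real
  assume "0 < r"
  then obtain N where N: "inverse (real (Suc N)) < r\<^sup>2"
    using reals_Archimedean[of "r\<^sup>2"] by auto
  have "norm (X m - X n) < r" if "N \<le> m" "N \<le> n" for m n
  proof (rule power_less_imp_less_base)
    show "(norm (X m - X n))\<^sup>2 < r\<^sup>2"
      using assms[OF that] N by linarith
  qed (use \<open>0 < r\<close> in simp)
  then show "\<exists>M. \<forall>m\<ge>M. \<forall>n\<ge>M. norm (X m - X n) < r"
    by blast
qed

lemma bounded_linear_functional_attains_onorm:
  fixes h :: "'a::chilbert_space \<Rightarrow> real"
  assumes h: "bounded_linear h" and L: "0 < onorm h"
  shows "\<exists>u. norm u = 1 \<and> h u = onorm h"
proof -
  define e where "e n = onorm h * inverse (real (Suc n)) / 8" for n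
  have "\<forall>n. \<exists>x. norm x \<le> 1 \<and> onorm h - e n < h x"
    using exists_unit_ball_near_onorm[OF h] L by (simp add: e_def)
  then obtain X where X_ball: "\<And>n. norm (X n) \<le> 1" and X_near: "\<And>n. onorm h - e n < h (X n)"
    by metis
  have "(norm (X m - X n))\<^sup>2 \<le> inverse (real (Suc N))" if "N \<le> m" "N \<le> n" for N m n
  proof -
    have "e k \<le> e N" if "N \<le> k" for k
      using that L by (simp add: e_def divide_right_mono le_imp_inverse_le)
    then have near_N: "onorm h - e N \<le> h (X k)" if "N \<le> k" for k
      using X_near[of k] that by (meson diff_left_mono less_imp_le order_trans)
    have "(norm (X m - X n))\<^sup>2 \<le> 8 * e N / onorm h"
      using near_maximizers_close[OF h L X_ball near_N X_ball near_N] that .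
    then show ?thesis
      using L by (simp add: e_def)
  qed
  then have "Cauchy X"
    by (rule Cauchy_if_power2_norm_diff_le)
  then obtain u where lim: "X \<longlonglongrightarrow> u"
    using Cauchy_convergent_iff convergent_def by blast
  have "norm u \<le> 1"
    using LIMSEQ_le_const2[OF tendsto_norm[OF lim]] X_ball by blast
  have lim_e: "(\<lambda>n. onorm h - e n) \<longlonglongrightarrow> onorm h - onorm h * 0 / 8"
    unfolding e_def by (intro tendsto_intros LIMSEQ_inverse_real_of_nat) simp
  have lim_h: "(\<lambda>n. h (X n)) \<longlonglongrightarrow> h u"
    using bounded_linear.tendsto[OF h lim] .
  have "onorm h \<le> h u"
    using tendsto_le[OF trivial_limit_sequentially lim_h lim_e] X_near
    by (simp add: less_imp_le)
  moreover have "h u \<le> onorm h * norm u"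
    using onorm[OF h, of u] by simp
  ultimately have "onorm h * 1 \<le> onorm h * norm u"
    by simp
  then have "norm u = 1"
    using \<open>norm u \<le> 1\<close> unfolding mult_le_cancel_left_pos[OF L] by simp
  with \<open>onorm h \<le> h u\<close> \<open>h u \<le> onorm h * norm u\<close> show ?thesis
    by auto
qed

lemma eq_0_if_le_quadratic:
  fixes d C :: real
  assumes "\<And>t. t * d \<le> C * t\<^sup>2"
  shows "d = 0"
proof (rule ccontr)
  assume "d \<noteq> 0"
  define k where "k = 2 * (\<bar>C\<bar> + 1)"
  have "k > 0"
    unfolding k_def by simp
  have "d / k * d \<le> C * (d / k)\<^sup>2"
    by (rule assms)
  also have "\<dots> \<le> \<bar>C\<bar> * (d / k)\<^sup>2"
    by (simp add: mult_right_mono)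
  finally have "k * d\<^sup>2 \<le> \<bar>C\<bar> * d\<^sup>2"
    using \<open>k > 0\<close> by (simp add: power2_eq_square field_simps)
  then have "(\<bar>C\<bar> + 2) * d\<^sup>2 \<le> 0"
    unfolding k_def by (simp add: algebra_simps)
  moreover have "0 < (\<bar>C\<bar> + 2) * d\<^sup>2"
    using \<open>d \<noteq> 0\<close> by (simp add: add_pos_nonneg)
  ultimately show False
    by simp
qed

lemma bounded_linear_functional_at_norming_vector:
  fixes h :: "'a::complex_inner \<Rightarrow> real"
  assumes h: "bounded_linear h" and u: "norm u = 1" "h u = onorm h"
  shows "h x = onorm h * Re (cinner u x)"
proof -
  define L where "L = onorm h"
  have "L \<ge> 0"
    unfolding L_def using h by (rule onorm_pos_le)
  have "t * (h x - L * Re (cinner u x)) \<le> (L * (norm x)\<^sup>2 / 2) * t\<^sup>2" for t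
  proof -
    define N where "N = norm (u + t *\<^sub>R x)"
    have N_sq: "N\<^sup>2 = 1 + 2 * t * Re (cinner u x) + t\<^sup>2 * (norm x)\<^sup>2"
      unfolding N_def power2_norm_add u(1) by (simp add: cinner_scaleR_right power_mult_distrib)
    have "N \<le> (1 + N\<^sup>2) / 2"
      using zero_le_power2[of "N - 1"] by (simp add: power2_eq_square algebra_simps)
    have "L + t * h x = h (u + t *\<^sub>R x)"
      using u(2) by (simp add: linear_simps[OF h] L_def)
    also have "\<dots> \<le> L * N"
      unfolding N_def L_def using onorm[OF h, of "u + t *\<^sub>R x"] by simp
    also have "\<dots> \<le> L * ((1 + N\<^sup>2) / 2)"
      using \<open>N \<le> (1 + N\<^sup>2) / 2\<close> \<open>L \<ge> 0\<close> by (rule mult_left_mono)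
    finally show ?thesis
      unfolding N_sq by (simp add: algebra_simps)
  qed
  then show ?thesis
    unfolding L_def using eq_0_if_le_quadratic by fastforce
qed

lemma riesz_representation_Re:
  fixes h :: "'a::chilbert_space \<Rightarrow> real"
  assumes h: "bounded_linear h"
  shows "\<exists>u. \<forall>x. h x = Re (cinner u x)"
proof (cases "onorm h = 0")
  case True
  then show ?thesis
    using onorm_eq_0[OF h] by (intro exI[of _ 0]) simp
next
  case False
  then obtain u where "norm u = 1" "h u = onorm h"
    using bounded_linear_functional_attains_onorm[OF h] onorm_pos_le[OF h] by force
  then show ?thesis
    using bounded_linear_functional_at_norming_vector[OF h]
    by (intro exI[of _ "onorm h *\<^sub>R u"]) (simp add: cinner_scaleR_left)
qed

lemma bounded_clinear_add: "bounded_clinear f \<Longrightarrow> f (x + y) = f x + f y"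
  unfolding bounded_clinear_def clinear_def by simp

lemma bounded_clinear_scaleC: "bounded_clinear f \<Longrightarrow> f (scaleC c x) = scaleC c (f x)"
  unfolding bounded_clinear_def clinear_def by simp

lemma bounded_clinear_scaleR: "bounded_clinear f \<Longrightarrow> f (r *\<^sub>R x) = r *\<^sub>R f x"
  by (simp add: scaleR_scaleC bounded_clinear_scaleC)

lemma bounded_clinear_imp_bounded_linear:
  assumes f: "bounded_clinear f"
  shows "bounded_linear f"
proof -
  obtain C where "\<And>x. norm (f x) \<le> norm x * C"
    using f unfolding bounded_clinear_def by blast
  then show ?thesis
    using bounded_clinear_add[OF f] bounded_clinear_scaleR[OF f] by (intro bounded_linear_intro) auto
qed

lemma scaleR_scaleC_commute: "r *\<^sub>R scaleC c x = scaleC c (r *\<^sub>R (x::'a::complex_vector))"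
  by (simp add: scaleR_scaleC scaleC_scaleC mult.commute)

lemma bounded_clinear_scaleR_compose:
  assumes f: "bounded_clinear f"
  shows "bounded_clinear (\<lambda>y. k *\<^sub>R f y)"
proof -
  obtain C where "\<And>x. norm (f x) \<le> norm x * C"
    using f unfolding bounded_clinear_def by blast
  then have "norm (k *\<^sub>R f x) \<le> norm x * (\<bar>k\<bar> * C)" for x
    using mult_left_mono[of "norm (f x)" "norm x * C" "\<bar>k\<bar>"] by (simp add: mult_ac)
  then show ?thesis
    using f unfolding bounded_clinear_def clinear_def by (auto simp: scaleR_add_right scaleR_scaleC_commute)
qed

lemma exists_adjoint_vector:
  fixes V :: "'a::chilbert_space \<Rightarrow> 'b::complex_inner"
  assumes V: "bounded_clinear V"
  shows "\<exists>u. \<forall>x. cinner (V x) y = cinner x u"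
proof -
  have V_lin: "bounded_linear V"
    using V by (rule bounded_clinear_imp_bounded_linear)
  have "bounded_linear (\<lambda>x. Re (cinner y (V x)))"
  proof (rule bounded_linear_intro)
    show "norm (Re (cinner y (V x))) \<le> norm x * (norm y * onorm V)" for x
      using abs_Re_cinner_le_norm[of y "V x"] mult_left_mono[OF onorm[OF V_lin, of x], of "norm y"]
      by (simp add: mult_ac)
  qed (simp_all add: linear_simps[OF V_lin] cinner_add_right cinner_scaleR_right)
  then obtain u where u: "\<And>x. Re (cinner y (V x)) = Re (cinner u x)"
    using riesz_representation_Re by blast
  have "cinner y (V x) = cinner u x" for x
  proof (rule complex_eqI)
    show "Re (cinner y (V x)) = Re (cinner u x)"
      by (rule u)
    show "Im (cinner y (V x)) = Im (cinner u x)"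
      using u[of "scaleC \<i> x"] by (simp add: bounded_clinear_scaleC[OF V] cinner_scaleC_right)
  qed
  then have "cinner (V x) y = cinner x u" for x
    by (metis cinner_conj)
  then show ?thesis
    by blast
qed

lemma cinner_adj:
  fixes V :: "'a::chilbert_space \<Rightarrow> 'b::complex_inner"
  assumes "bounded_clinear V"
  shows "cinner (V x) y = cinner x (adj V y)"
proof -
  have "\<exists>S. \<forall>x y. cinner (V x) y = cinner x (S y)"
    using exists_adjoint_vector[OF assms] by metis
  then show ?thesis
    unfolding adj_def by (rule someI_ex[where P = "\<lambda>S. \<forall>x y. cinner (V x) y = cinner x (S y)", THEN spec, THEN spec])
qed

lemma isometry_norm:
  assumes "isometry V"
  shows "norm (V x) = norm x"
proof -
  have "Re (cinner (V x) (V x)) = Re (cinner x (adj V (V x)))"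
    using assms unfolding isometry_def by (simp add: cinner_adj)
  also have "adj V (V x) = x"
    using assms unfolding isometry_def by (metis comp_apply id_apply)
  finally show ?thesis
    by (simp add: norm_cinner)
qed

lemma onorm_isometry:
  fixes V :: "'a::chilbert_space \<Rightarrow> 'b::chilbert_space"
  assumes V: "isometry V" and "(x::'a) \<noteq> 0"
  shows "onorm V = 1"
proof (rule antisym)
  show "onorm V \<le> 1"
    by (rule onorm_bound) (simp_all add: isometry_norm[OF V])
  have "bounded_linear V"
    using V unfolding isometry_def by (simp add: bounded_clinear_imp_bounded_linear)
  then show "1 \<le> onorm V"
    using le_onorm[of V x] \<open>x \<noteq> 0\<close> by (simp add: isometry_norm[OF V])
qed

section \<open>Operator matrix norms and the cb-norm\<close>

lemma matnorm_bdd: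
  fixes B :: "nat \<Rightarrow> nat \<Rightarrow> 'a::complex_inner \<Rightarrow> 'b::complex_inner"
  assumes B: "\<forall>i<n. \<forall>j<n. bounded_clinear (B i j)"
  shows "bdd_above ((\<lambda>x. sqrt (\<Sum>i<n. (norm (\<Sum>j<n. B i j (x j)))\<^sup>2)) ` {x. (\<Sum>j<n. (norm (x j))\<^sup>2) \<le> 1})"
proof -
  define D where "D = (\<Sum>i<n. \<Sum>j<n. onorm (B i j))"
  have B_lin: "bounded_linear (B i j)" if "i < n" "j < n" for i j
    using B that by (simp add: bounded_clinear_imp_bounded_linear)
  have "sqrt (\<Sum>i<n. (norm (\<Sum>j<n. B i j (x j)))\<^sup>2) \<le> sqrt (\<Sum>i<n. D\<^sup>2)"
    if x: "(\<Sum>j<n. (norm (x j))\<^sup>2) \<le> 1" for x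
  proof -
    have x_ball: "norm (x j) \<le> 1" if "j < n" for j
    proof -
      have "(norm (x j))\<^sup>2 \<le> 1"
        using member_le_sum[of j "{..<n}" "\<lambda>j. (norm (x j))\<^sup>2"] that x by simp
      then show ?thesis
        by (simp add: power_le_one_iff)
    qed
    have "norm (\<Sum>j<n. B i j (x j)) \<le> D" if "i < n" for i
    proof -
      have "norm (\<Sum>j<n. B i j (x j)) \<le> (\<Sum>j<n. onorm (B i j) * norm (x j))"
        using onorm[OF B_lin[OF that]] by (intro order_trans[OF norm_sum] sum_mono) simp
      also have "\<dots> \<le> (\<Sum>j<n. onorm (B i j))"
        using x_ball onorm_pos_le[OF B_lin[OF that]] by (intro sum_mono) (simp add: mult_left_le)
      also have "\<dots> \<le> D"
        unfolding D_def using that B_lin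
        by (intro member_le_sum[of i "{..<n}" "\<lambda>i. \<Sum>j<n. onorm (B i j)"]) (auto intro!: sum_nonneg onorm_pos_le)
      finally show ?thesis .
    qed
    then show ?thesis
      by (intro real_sqrt_le_mono sum_mono power_mono) simp_all
  qed
  then show ?thesis
    unfolding bdd_above_def by blast
qed

lemma matnorm_upper:
  fixes B :: "nat \<Rightarrow> nat \<Rightarrow> 'a::complex_inner \<Rightarrow> 'b::complex_inner"
  assumes "\<forall>i<n. \<forall>j<n. bounded_clinear (B i j)" and "(\<Sum>j<n. (norm (x j))\<^sup>2) \<le> 1"
  shows "sqrt (\<Sum>i<n. (norm (\<Sum>j<n. B i j (x j)))\<^sup>2) \<le> matnorm n B"
  unfolding matnorm_def using assms(2) by (intro cSUP_upper matnorm_bdd[OF assms(1)]) simp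

lemma matnorm_least:
  fixes B :: "nat \<Rightarrow> nat \<Rightarrow> 'a::complex_inner \<Rightarrow> 'b::complex_inner"
  assumes "\<And>x. (\<Sum>j<n. (norm (x j))\<^sup>2) \<le> 1 \<Longrightarrow> sqrt (\<Sum>i<n. (norm (\<Sum>j<n. B i j (x j)))\<^sup>2) \<le> b"
  shows "matnorm n B \<le> b"
  unfolding matnorm_def using assms by (intro cSUP_least) (auto intro!: exI[of _ "\<lambda>_. 0"])

lemma matnorm_scaleR_le:
  fixes B :: "nat \<Rightarrow> nat \<Rightarrow> 'a::complex_inner \<Rightarrow> 'b::complex_inner"
  assumes B: "\<forall>i<n. \<forall>j<n. bounded_clinear (B i j)" and "0 \<le> k"
  shows "matnorm n (\<lambda>i j y. k *\<^sub>R B i j y) \<le> k * matnorm n B"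
proof (rule matnorm_least)
  fix x :: "nat \<Rightarrow> 'a"
  assume x: "(\<Sum>j<n. (norm (x j))\<^sup>2) \<le> 1"
  have "(\<Sum>i<n. (norm (\<Sum>j<n. k *\<^sub>R B i j (x j)))\<^sup>2) = k\<^sup>2 * (\<Sum>i<n. (norm (\<Sum>j<n. B i j (x j)))\<^sup>2)"
    using \<open>0 \<le> k\<close> by (simp add: scaleR_sum_right[symmetric] power_mult_distrib sum_distrib_left)
  then have "sqrt (\<Sum>i<n. (norm (\<Sum>j<n. k *\<^sub>R B i j (x j)))\<^sup>2) = k * sqrt (\<Sum>i<n. (norm (\<Sum>j<n. B i j (x j)))\<^sup>2)"
    using \<open>0 \<le> k\<close> by (simp add: real_sqrt_mult)
  also have "\<dots> \<le> k * matnorm n B"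
    using matnorm_upper[OF B x] \<open>0 \<le> k\<close> by (rule mult_left_mono)
  finally show "sqrt (\<Sum>i<n. (norm (\<Sum>j<n. k *\<^sub>R B i j (x j)))\<^sup>2) \<le> k * matnorm n B" .
qed

lemma zero_in_cb_values: "0 \<in> cb_values A \<phi>"
  unfolding cb_values_def
  by (rule CollectI, rule exI[of _ 0], rule exI[of _ "\<lambda>i j. id"]) (simp add: matnorm_def)

lemma cbnorm_nonneg: "CB A \<phi> \<Longrightarrow> 0 \<le> cbnorm A \<phi>"
  unfolding CB_def cbnorm_def by (intro cSup_upper zero_in_cb_values) simp

lemma cbnorm_le:
  assumes "\<And>v. v \<in> cb_values A \<phi> \<Longrightarrow> v \<le> b"
  shows "cbnorm A \<phi> \<le> b"
  unfolding cbnorm_def using zero_in_cb_values assms by (intro cSup_least) blast+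

lemma cbnorm_zero_map:
  assumes "zero_map A \<phi>"
  shows "cbnorm A \<phi> = 0"
proof -
  have vals: "v \<le> 0" if v_in: "v \<in> cb_values A \<phi>" for v
  proof -
    obtain n M where "v = matnorm n (\<lambda>i j. \<phi> (M i j))" and "\<forall>i<n. \<forall>j<n. M i j \<in> A"
      using v_in unfolding cb_values_def by blast
    then show "v \<le> 0"
      using assms unfolding zero_map_def by (auto intro!: matnorm_least)
  qed
  then have "bdd_above (cb_values A \<phi>)"
    unfolding bdd_above_def by blast
  then have "0 \<le> cbnorm A \<phi>"
    unfolding cbnorm_def by (rule cSup_upper[OF zero_in_cb_values])
  with vals show ?thesis
    using cbnorm_le[of A \<phi> 0] by simp
qed

lemma CC_normalized:
  assumes \<phi>: "CB A \<phi>"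
  shows "CC A (\<lambda>a y. (1 / cbnorm A \<phi>) *\<^sub>R \<phi> a y)"
proof -
  define k where "k = 1 / cbnorm A \<phi>"
  have "0 \<le> k" "k * cbnorm A \<phi> \<le> 1"
    using cbnorm_nonneg[OF \<phi>] unfolding k_def by simp_all
  have lin: "linear_on A \<phi>" and bdd: "bdd_above (cb_values A \<phi>)"
    using \<phi> unfolding CB_def by auto
  have vals: "v \<le> 1" if v_in: "v \<in> cb_values A (\<lambda>a y. k *\<^sub>R \<phi> a y)" for v
  proof -
    obtain n M where v: "v = matnorm n (\<lambda>i j y. k *\<^sub>R \<phi> (M i j) y)"
      and M: "\<forall>i<n. \<forall>j<n. M i j \<in> A" "matnorm n M \<le> 1"
      using v_in unfolding cb_values_def by blast
    have "\<forall>i<n. \<forall>j<n. bounded_clinear (\<phi> (M i j))"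
      using M lin unfolding linear_on_def by blast
    then have "v \<le> k * matnorm n (\<lambda>i j. \<phi> (M i j))"
      unfolding v using \<open>0 \<le> k\<close> by (rule matnorm_scaleR_le)
    also have "\<dots> \<le> k * cbnorm A \<phi>"
      unfolding cbnorm_def using M bdd \<open>0 \<le> k\<close>
      by (intro mult_left_mono cSup_upper) (auto simp: cb_values_def)
    finally show ?thesis
      using \<open>k * cbnorm A \<phi> \<le> 1\<close> by simp
  qed
  have "linear_on A (\<lambda>a y. k *\<^sub>R \<phi> a y)"
    using lin unfolding linear_on_def
    by (auto simp: bounded_clinear_scaleR_compose scaleR_add_right scaleR_scaleC_commute)
  moreover have "bdd_above (cb_values A (\<lambda>a y. k *\<^sub>R \<phi> a y))"
    using vals unfolding bdd_above_def by blast
  moreover have "cbnorm A (\<lambda>a y. k *\<^sub>R \<phi> a y) \<le> 1"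
    using vals by (rule cbnorm_le)
  ultimately show ?thesis
    unfolding CC_def CB_def k_def by simp
qed

section \<open>The sets \<open>\<R>\<^sub>\<tau>(\<phi>)\<close> and \<open>\<F>\<^sub>\<tau>(\<phi>)\<close>\<close>

lemma bounded_linear_Gamma:
  assumes "bounded_linear (\<tau> id)" and "bounded_linear W"
  shows "bounded_linear (Gamma A \<tau> W)"
  unfolding Gamma_def using assms
  by (intro bounded_linear_Pair bounded_linear_compose[OF bounded_linear_scaleR_right]
      bounded_linear_compose[of "\<tau> id" W])

lemma power2_norm_Gamma:
  "(norm (Gamma A \<tau> W x))\<^sup>2 = ((norm (W x))\<^sup>2 + (norm (\<tau> id (W x)))\<^sup>2) / 2"
  unfolding Gamma_def norm_Pair by (simp add: power_mult_distrib power_divide)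

lemma onorm_Gamma_lower:
  assumes T: "bounded_linear (\<tau> id)" and W: "bounded_linear W"
  shows "1 / sqrt 2 * onorm W \<le> onorm (Gamma A \<tau> W)"
proof -
  have G: "bounded_linear (Gamma A \<tau> W)"
    using T W by (rule bounded_linear_Gamma)
  have "norm (W x) \<le> sqrt 2 * onorm (Gamma A \<tau> W) * norm x" for x
  proof -
    have "(norm (W x))\<^sup>2 \<le> (sqrt 2 * norm (Gamma A \<tau> W x))\<^sup>2"
      unfolding power_mult_distrib power2_norm_Gamma by simp
    then have "norm (W x) \<le> sqrt 2 * norm (Gamma A \<tau> W x)"
      by (rule power2_le_imp_le) simp
    also have "\<dots> \<le> sqrt 2 * (onorm (Gamma A \<tau> W) * norm x)"
      using onorm[OF G] by (simp add: mult_left_mono)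
    finally show ?thesis
      by (simp add: mult.assoc)
  qed
  then have "onorm W \<le> sqrt 2 * onorm (Gamma A \<tau> W)"
    using onorm_pos_le[OF G] by (intro onorm_bound) simp_all
  then show ?thesis
    by (simp add: field_simps)
qed

lemma onorm_Gamma_upper:
  assumes T: "bounded_linear (\<tau> id)" and W: "bounded_linear W"
  shows "onorm (Gamma A \<tau> W) \<le> sqrt (1 + (onorm (\<tau> id))\<^sup>2) / sqrt 2 * onorm W"
proof -
  define U where "U = sqrt (1 + (onorm (\<tau> id))\<^sup>2) / sqrt 2 * onorm W"
  have "norm (Gamma A \<tau> W x) \<le> U * norm x" for x
  proof (rule power2_le_imp_le)
    have "norm (\<tau> id (W x)) \<le> onorm (\<tau> id) * (onorm W * norm x)"
      using onorm[OF T, of "W x"] onorm[OF W, of x] onorm_pos_le[OF T]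
      by (meson mult_left_mono order_trans)
    then have "(norm (\<tau> id (W x)))\<^sup>2 \<le> (onorm (\<tau> id) * (onorm W * norm x))\<^sup>2"
      by (rule power_mono) simp
    moreover have "(norm (W x))\<^sup>2 \<le> (onorm W * norm x)\<^sup>2"
      using onorm[OF W, of x] by (rule power_mono) simp
    ultimately have "(norm (Gamma A \<tau> W x))\<^sup>2
        \<le> ((onorm W * norm x)\<^sup>2 + (onorm (\<tau> id) * (onorm W * norm x))\<^sup>2) / 2"
      unfolding power2_norm_Gamma by simp
    also have "\<dots> = (U * norm x)\<^sup>2"
      unfolding U_def by (simp add: power_divide algebra_simps)
    finally show "(norm (Gamma A \<tau> W x))\<^sup>2 \<le> (U * norm x)\<^sup>2" .
    show "0 \<le> U * norm x"
      unfolding U_def using onorm_pos_le[OF W] by simp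
  qed
  then show ?thesis
    unfolding U_def using onorm_pos_le[OF W] by (intro onorm_bound) simp_all
qed

lemma Rset_nonempty:
  fixes \<tau> :: "('l::chilbert_space \<Rightarrow> 'l) \<Rightarrow> ('k::chilbert_space \<Rightarrow> 'k)"
    and \<phi> :: "('l \<Rightarrow> 'l) \<Rightarrow> ('h::chilbert_space \<Rightarrow> 'h)"
  assumes \<tau>: "universal_regular_model A TYPE('h) \<tau>" and \<phi>: "CB A \<phi>"
  shows "Rset A \<tau> \<phi> \<noteq> {}"
proof (cases "zero_map A \<phi>")
  case False
  obtain V :: "'h \<Rightarrow> 'k" where "isometry V"
    and "\<forall>a\<in>A. (\<lambda>y. (1 / cbnorm A \<phi>) *\<^sub>R \<phi> a y) = adj V \<circ> \<tau> a \<circ> V"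
    using \<tau> CC_normalized[OF \<phi>] unfolding universal_regular_model_def by blast
  then show ?thesis
    using False unfolding Rset_def by auto
qed (simp add: Rset_def)

lemma Rset_onorm:
  assumes \<phi>: "CB A \<phi>" and W: "W \<in> Rset A \<tau> \<phi>"
  shows "bounded_linear W \<and> onorm W = sqrt (cbnorm A \<phi>)"
proof (cases "zero_map A \<phi>")
  case True
  then show ?thesis
    using W by (simp add: Rset_def cbnorm_zero_map onorm_zero)
next
  case False
  then obtain V where V: "isometry V" and W_eq: "W = (\<lambda>x. sqrt (cbnorm A \<phi>) *\<^sub>R V x)"
    using W unfolding Rset_def by auto
  \<comment> \<open>\<open>H \<noteq> 0\<close> is needed for \<open>onorm V = 1\<close>; it holds because \<open>\<phi> \<noteq> 0\<close>.\<close>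
  from False obtain a x where a: "a \<in> A" and "\<phi> a x \<noteq> 0"
    unfolding zero_map_def by (auto simp: fun_eq_iff)
  moreover have "bounded_linear (\<phi> a)"
    using \<phi> a unfolding CB_def linear_on_def by (simp add: bounded_clinear_imp_bounded_linear)
  ultimately have "x \<noteq> 0"
    using linear_0[OF bounded_linear.linear] by force
  have "bounded_linear V"
    using V unfolding isometry_def by (simp add: bounded_clinear_imp_bounded_linear)
  then show ?thesis
    unfolding W_eq using onorm_isometry[OF V \<open>x \<noteq> 0\<close>]
    by (simp add: onorm_scaleR bounded_linear_compose[OF bounded_linear_scaleR_right] cbnorm_nonneg[OF \<phi>])
qed

lemma Fset_zero:
  assumes "bounded_linear (\<tau> id)"
  shows "Fset A \<tau> (\<lambda>a x. 0) = {\<lambda>x. 0}"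
  using linear_0[OF bounded_linear.linear[OF assms]]
  by (simp add: Fset_def Rset_def zero_map_def Gamma_def zero_prod_def)

lemma op_hausdist_zero_bounds:
  fixes S :: "('a::real_normed_vector \<Rightarrow> 'b::real_normed_vector) set"
  assumes "S \<noteq> {}" and bounds: "\<And>s. s \<in> S \<Longrightarrow> lo \<le> onorm s \<and> onorm s \<le> hi"
  shows "lo \<le> op_hausdist S {\<lambda>x. 0} \<and> op_hausdist S {\<lambda>x. 0} \<le> hi"
proof -
  obtain s0 where "s0 \<in> S"
    using assms(1) by blast
  have above: "bdd_above (onorm ` S)" and below: "bdd_below (onorm ` S)"
    using bounds unfolding bdd_above_def bdd_below_def by blast+
  have "op_hausdist S {\<lambda>x. 0} = (SUP s\<in>S. onorm s)"
    unfolding op_hausdist_def using cInf_le_cSup[OF _ above below] assms(1) by simp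
  moreover have "lo \<le> (SUP s\<in>S. onorm s)"
    using bounds[OF \<open>s0 \<in> S\<close>] cSUP_upper[OF \<open>s0 \<in> S\<close> above] by linarith
  moreover have "(SUP s\<in>S. onorm s) \<le> hi"
    using assms(1) bounds by (intro cSUP_least) auto
  ultimately show ?thesis
    by simp
qed

theorem lemma3p5:
  fixes A :: "('l::chilbert_space \<Rightarrow> 'l) set"
    and \<tau> :: "('l \<Rightarrow> 'l) \<Rightarrow> ('k::chilbert_space \<Rightarrow> 'k)"
    and \<phi> :: "('l \<Rightarrow> 'l) \<Rightarrow> ('h::chilbert_space \<Rightarrow> 'h)"
  assumes "unital_cstar_algebra A"
    and "universal_regular_model A TYPE('h) \<tau>"
    and "CB A \<phi>"
  shows "(1 / sqrt 2) * sqrt (cbnorm A \<phi>) \<le> delta_reg A \<tau> \<phi> (\<lambda>a x. 0)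
       \<and> delta_reg A \<tau> \<phi> (\<lambda>a x. 0)
           \<le> (sqrt (1 + (onorm (\<tau> id))\<^sup>2) / sqrt 2) * sqrt (cbnorm A \<phi>)"
proof -
  have "id \<in> A"
    using assms(1) unfolding unital_cstar_algebra_def by simp
  then have T: "bounded_linear (\<tau> id)"
    using assms(2) unfolding universal_regular_model_def regular_hom_def linear_on_def
    by (simp add: bounded_clinear_imp_bounded_linear)
  have "Fset A \<tau> \<phi> \<noteq> {}"
    using Rset_nonempty[OF assms(2,3)] unfolding Fset_def by simp
  moreover have "(1 / sqrt 2) * sqrt (cbnorm A \<phi>) \<le> onorm s
      \<and> onorm s \<le> (sqrt (1 + (onorm (\<tau> id))\<^sup>2) / sqrt 2) * sqrt (cbnorm A \<phi>)"
    if s_in: "s \<in> Fset A \<tau> \<phi>" for s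
  proof -
    obtain W where W: "W \<in> Rset A \<tau> \<phi>" and s: "s = Gamma A \<tau> W"
      using s_in unfolding Fset_def by blast
    have W_lin: "bounded_linear W" and W_norm: "onorm W = sqrt (cbnorm A \<phi>)"
      using Rset_onorm[OF assms(3) W] by simp_all
    show ?thesis
      unfolding s W_norm[symmetric]
      using onorm_Gamma_lower[where \<tau> = \<tau>, OF T W_lin] onorm_Gamma_upper[where \<tau> = \<tau>, OF T W_lin] by blast
  qed
  ultimately show ?thesis
    unfolding delta_reg_def Fset_zero[where \<tau> = \<tau>, OF T] by (rule op_hausdist_zero_bounds)
qed

end
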